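(* Consider the $l$-th cycle of RPF-SFISTA and assume $\mu=\mu_{l-1}\in(0,\bar\mu]$. Let $\gamma_j(x):=\phi(y_j)+2[\ell_f(y_j;\tilde x_{j-1})-f(y_j)]+\langle s_j,x-y_j\rangle+\frac{\mu}{4}\|x-y_j\|^2$. Then for every iteration index $j\ge1$ generated in this cycle, $\gamma_j(x)\le\phi(x)$ for all $x\in\mathbb R^n$.
   Context: Setup. Let $f:\mathbb R^n\to\mathbb R$ be convex and differentiable with $\|\nabla f(z')-\nabla f(z)\|\le\bar L\|z'-z\|$ for all $z,z'\in\mathbb R^n$ (some $\bar L\ge0$). Let $h:\mathbb R^n\to(-\infty,\infty]$ be proper, lower semicontinuous and convex with domain $\mathcal H$. Let $\phi:=f+h$ be $\bar\mu$-strongly convex for some $\bar\mu>0$ (the entire sum, not necessarily $f$ or $h$ individually). Write $\ell_f(u;x):=f(x)+\langle\nabla f(x),u-x\rangle$. RPF-SFISTA. Parameters $\chi\in(0,1)$, $\beta>1$; inputs $\mu_0>0$, $\bar M_0>0$, $z_0\in\mathcal H$, $\hat\epsilon>0$. The method runs in cycles $l=1,2,\dots$. At the start of cycle $l$: choose $\underline M_l\in[\max\{\bar M_{l-1}/4,\bar M_0\},\bar M_{l-1}]$ (so $\underline M_1=\bar M_0$), set $\mu:=\mu_{l-1}$, $x_0:=z_{l-1}$, $\xi_0:=y_0:=x_0$, $A_0:=0$, $\tau_0:=1$, $L_0:=\underline M_l$. Then for $j=1,2,\dots$: (i) set $L_j:=L_{j-1}$; (ii) compute $a_{j-1}=\frac{\tau_{j-1}+\sqrt{\tau_{j-1}^2+4\tau_{j-1}A_{j-1}L_j}}{2L_j}$,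 $\tilde x_{j-1}=\frac{A_{j-1}y_{j-1}+a_{j-1}x_{j-1}}{A_{j-1}+a_{j-1}}$, $y_j=\arg\min_{u}\{\ell_f(u;\tilde x_{j-1})+h(u)+\frac{L_j}{2}\|u-\tilde x_{j-1}\|^2\}$; if $f(y_j)\le\ell_f(y_j;\tilde x_{j-1})+\frac{(1-\chi)L_j}{4}\|y_j-\tilde x_{j-1}\|^2$ go to (iii), otherwise replace $L_j$ by $\beta L_j$ and repeat (ii); (iii) set $\xi_j:=y_j$ if $\phi(y_j)\le\phi(\xi_{j-1})$ and $\xi_j:=\xi_{j-1}$ otherwise; $A_j:=A_{j-1}+a_{j-1}$; $\tau_j:=\tau_{j-1}+a_{j-1}\mu/2$; $s_j:=L_j(\tilde x_{j-1}-y_j)$; $x_j:=\tau_j^{-1}[\mu a_{j-1}y_j/2+\tau_{j-1}x_{j-1}-a_{j-1}s_j]$; $v_j:=\nabla f(y_j)-\nabla f(\tilde x_{j-1})+s_j$; (iv) if $\|\xi_j-x_0\|^2<\chi A_jL_j\|y_j-\tilde x_{j-1}\|^2$, the cycle ends with a restart: set $z_l:=\xi_j$, $\bar M_l:=L_j$, $\mu_l:=\mu/2$ and start cycle $l+1$; (v) otherwise, if $\|v_j\|\le\hat\epsilon$, stop and output $(y,v,\xi,L):=(y_j,v_j,\xi_j,L_j)$; else go to iteration $j+1$. In these formulas $L_j$, $a_{j-1}$, $\tilde x_{j-1}$, $y_j$ denote the final (accepted) values after the line search in (ii). *)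

theory Defs
  imports "HOL-Analysis.Analysis"
begin

definition lin :: "('a::euclidean_space \<Rightarrow> real) \<Rightarrow> ('a \<Rightarrow> 'a) \<Rightarrow> 'a \<Rightarrow> 'a \<Rightarrow> real" where
  "lin f f' u x = f x + inner (f' x) (u - x)"

definition strongly_convex_on :: "'a::real_inner set \<Rightarrow> real \<Rightarrow> ('a \<Rightarrow> real) \<Rightarrow> bool" where
  "strongly_convex_on S m g \<longleftrightarrow> convex S \<and>
     (\<forall>x\<in>S. \<forall>y\<in>S. \<forall>t::real. 0 \<le> t \<longrightarrow> t \<le> 1 \<longrightarrow>
        g (t *\<^sub>R x + (1 - t) *\<^sub>R y) \<le> t * g x + (1 - t) * g y - m / 2 * t * (1 - t) * (norm (x - y))\<^sup>2)"

definition a_of :: "real \<Rightarrow> real \<Rightarrow> real \<Rightarrow> real" where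
  "a_of \<tau> A L = (\<tau> + sqrt (\<tau>\<^sup>2 + 4 * \<tau> * A * L)) / (2 * L)"

definition xt_of :: "real \<Rightarrow> 'a::real_vector \<Rightarrow> real \<Rightarrow> 'a \<Rightarrow> 'a" where
  "xt_of A y a x = (1 / (A + a)) *\<^sub>R (A *\<^sub>R y + a *\<^sub>R x)"

text \<open>y is a minimizer of u \<mapsto> l_f(u;xt) + h(u) + L/2 |u - xt|^2 (h = +\<infinity> outside H).\<close>
definition prox_pt :: "('a::euclidean_space \<Rightarrow> real) \<Rightarrow> ('a \<Rightarrow> 'a) \<Rightarrow> ('a \<Rightarrow> real) \<Rightarrow> 'a set
    \<Rightarrow> 'a \<Rightarrow> real \<Rightarrow> 'a \<Rightarrow> bool" where
  "prox_pt f f' h H xt L y \<longleftrightarrow> y \<in> H \<and>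
     (\<forall>u\<in>H. lin f f' y xt + h y + L / 2 * (norm (y - xt))\<^sup>2
             \<le> lin f f' u xt + h u + L / 2 * (norm (u - xt))\<^sup>2)"

definition ls_ok :: "('a::euclidean_space \<Rightarrow> real) \<Rightarrow> ('a \<Rightarrow> 'a) \<Rightarrow> real \<Rightarrow> 'a \<Rightarrow> real \<Rightarrow> 'a \<Rightarrow> bool" where
  "ls_ok f f' chi xt L y \<longleftrightarrow> f y \<le> lin f f' y xt + (1 - chi) * L / 4 * (norm (y - xt))\<^sup>2"

text \<open>The sequences L, a, xt, y, s, A, tau, x, xi, v are those generated by iterations
  j = 1..J of one cycle of RPF-SFISTA started with mu, x0 = z_{l-1}, L_0 = Lstart
  (= underline M_l); iterations 1..J-1 ended neither with a restart nor with a stop.\<close>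
definition rpf_cycle ::
  "('a::euclidean_space \<Rightarrow> real) \<Rightarrow> ('a \<Rightarrow> 'a) \<Rightarrow> ('a \<Rightarrow> real) \<Rightarrow> 'a set \<Rightarrow>
   real \<Rightarrow> real \<Rightarrow> real \<Rightarrow> 'a \<Rightarrow> real \<Rightarrow> real \<Rightarrow>
   (nat \<Rightarrow> real) \<Rightarrow> (nat \<Rightarrow> real) \<Rightarrow> (nat \<Rightarrow> 'a) \<Rightarrow> (nat \<Rightarrow> 'a) \<Rightarrow> (nat \<Rightarrow> 'a) \<Rightarrow>
   (nat \<Rightarrow> real) \<Rightarrow> (nat \<Rightarrow> real) \<Rightarrow> (nat \<Rightarrow> 'a) \<Rightarrow> (nat \<Rightarrow> 'a) \<Rightarrow> (nat \<Rightarrow> 'a) \<Rightarrow> nat \<Rightarrow> bool" where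
  "rpf_cycle f f' h H chi \<beta> \<mu> x0 Lstart \<epsilon> L a xt y s A \<tau> x \<xi> v J \<longleftrightarrow>
     x 0 = x0 \<and> \<xi> 0 = x0 \<and> y 0 = x0 \<and> A 0 = 0 \<and> \<tau> 0 = 1 \<and> L 0 = Lstart \<and>
     (\<forall>j\<in>{1..J}.
        (\<exists>k::nat. L j = \<beta> ^ k * L (j - 1) \<and>
           (\<forall>k'<k. \<forall>y'. prox_pt f f' h H
                  (xt_of (A (j - 1)) (y (j - 1)) (a_of (\<tau> (j - 1)) (A (j - 1)) (\<beta> ^ k' * L (j - 1))) (x (j - 1)))
                  (\<beta> ^ k' * L (j - 1)) y' \<longrightarrow>
               \<not> ls_ok f f' chi
                  (xt_of (A (j - 1)) (y (j - 1)) (a_of (\<tau> (j - 1)) (A (j - 1)) (\<beta> ^ k' * L (j - 1))) (x (j - 1)))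
                  (\<beta> ^ k' * L (j - 1)) y')) \<and>
        a (j - 1) = a_of (\<tau> (j - 1)) (A (j - 1)) (L j) \<and>
        xt (j - 1) = xt_of (A (j - 1)) (y (j - 1)) (a (j - 1)) (x (j - 1)) \<and>
        prox_pt f f' h H (xt (j - 1)) (L j) (y j) \<and>
        ls_ok f f' chi (xt (j - 1)) (L j) (y j) \<and>
        \<xi> j = (if f (y j) + h (y j) \<le> f (\<xi> (j - 1)) + h (\<xi> (j - 1)) then y j else \<xi> (j - 1)) \<and>
        A j = A (j - 1) + a (j - 1) \<and>
        \<tau> j = \<tau> (j - 1) + a (j - 1) * \<mu> / 2 \<and>
        s j = L j *\<^sub>R (xt (j - 1) - y j) \<and>
        x j = (1 / \<tau> j) *\<^sub>R ((\<mu> * a (j - 1) / 2) *\<^sub>R y j + \<tau> (j - 1) *\<^sub>R x (j - 1) - a (j - 1) *\<^sub>R s j) \<and>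
        v j = f' (y j) - f' (xt (j - 1)) + s j) \<and>
     (\<forall>j\<in>{1..<J}.
        \<not> ((norm (\<xi> j - x0))\<^sup>2 < chi * A j * L j * (norm (y j - xt (j - 1)))\<^sup>2) \<and>
        \<not> (norm (v j) \<le> \<epsilon>))"

end

theory Submission imports Defs begin

text \<open>
  The prox step makes \<open>s = L (xt - y)\<close> a subgradient of \<open>l\<^sub>f(\<cdot>; xt) + h\<close> at \<open>y\<close>, and
  \<open>l\<^sub>f(\<cdot>; xt) \<le> f\<close> by convexity of \<open>f\<close>. Evaluating this lower bound at the midpoint
  \<open>w = (z + y)/2\<close> and bounding \<open>\<phi>(w)\<close> by strong convexity of \<open>\<phi>\<close> gives
  \<open>l\<^sub>f(y; xt) + h(y) + \<langle>s, z - y\<rangle>/2 \<le> (\<phi>(z) + \<phi>(y))/2 - \<mu> |z - y|\<^sup>2/8\<close>;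
  doubling this is the claim.
\<close>

lemma convex_on_has_derivative_above_tangent:
  fixes f :: "'a::real_inner \<Rightarrow> real"
  assumes convex: "convex_on UNIV f"
    and deriv: "(f has_derivative (\<lambda>d. inner (f' x) d)) (at x)"
  shows "f x + inner (f' x) (w - x) \<le> f w"
proof -
  define g where "g = (\<lambda>t::real. f (x + t *\<^sub>R (w - x)))"
  have "convex_on UNIV g"
    unfolding convex_on_def g_def
  proof (intro conjI allI impI ballI)
    fix a b u v :: real assume uv: "0 \<le> u" "0 \<le> v" "u + v = 1"
    have "x + (u * a + v * b) *\<^sub>R (w - x) = u *\<^sub>R (x + a *\<^sub>R (w - x)) + v *\<^sub>R (x + b *\<^sub>R (w - x))"
      using uv(3) by (simp add: algebra_simps flip: scaleR_add_left)
    then show "f (x + (u *\<^sub>R a + v *\<^sub>R b) *\<^sub>R (w - x))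
        \<le> u * f (x + a *\<^sub>R (w - x)) + v * f (x + b *\<^sub>R (w - x))"
      using convex uv unfolding convex_on_def by simp
  qed simp
  moreover have "(g has_derivative (\<lambda>t. inner (f' (x + 0 *\<^sub>R (w - x))) (t *\<^sub>R (w - x)))) (at 0)"
    unfolding g_def
    by (rule has_derivative_compose[of "\<lambda>t. x + t *\<^sub>R (w - x)" _ _ _ f])
       (auto intro!: derivative_eq_intros deriv)
  then have "(g has_field_derivative inner (f' x) (w - x)) (at 0 within UNIV)"
    by (simp add: has_field_derivative_def mult.commute[of _ "inner (f' x) (w - x)"])
  ultimately have "g 1 - g 0 \<ge> inner (f' x) (w - x)"
    using convex_on_imp_above_tangent[of UNIV g 0 1] by simp
  then show ?thesis by (simp add: g_def)
qed

lemma nonneg_if_nonneg_perturbations: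
  fixes E K :: real
  assumes "\<And>t. 0 < t \<Longrightarrow> t \<le> 1 \<Longrightarrow> 0 \<le> E + t * K"
  shows "0 \<le> E"
proof (rule tendsto_lowerbound)
  show "((\<lambda>t. E + t * K) \<longlongrightarrow> E) (at_right 0)"
    by (auto intro!: tendsto_eq_intros)
  have "\<forall>\<^sub>F t in at_right 0. t \<in> {0::real<..<1}"
    by (rule eventually_at_right_real) simp
  then show "\<forall>\<^sub>F t in at_right 0. 0 \<le> E + t * K"
    by eventually_elim (use assms in auto)
qed simp

text \<open>First-order optimality of the prox point: comparing \<open>y\<close> with \<open>(1 - t) y + t w\<close>
  and letting \<open>t \<rightarrow> 0\<^sup>+\<close> kills the quadratic term.\<close>

lemma prox_pt_variational_ineq:
  fixes f :: "'a::euclidean_space \<Rightarrow> real"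
  assumes h: "convex_on H h" and prox: "prox_pt f f' h H xt L y" and w: "w \<in> H"
  shows "lin f f' y xt + h y + inner (L *\<^sub>R (xt - y)) (w - y) \<le> lin f f' w xt + h w"
proof -
  have y: "y \<in> H" using prox by (simp add: prox_pt_def)
  define E where "E = lin f f' w xt + h w - (lin f f' y xt + h y) - inner (L *\<^sub>R (xt - y)) (w - y)"
  have "0 \<le> E + t * (L / 2 * (norm (w - y))\<^sup>2)" if t: "0 < t" "t \<le> 1" for t
  proof -
    define u where "u = (1 - t) *\<^sub>R y + t *\<^sub>R w"
    have "u \<in> H" using convex_on_imp_convex[OF h] y w t unfolding u_def by (simp add: convex_def)
    then have min: "lin f f' y xt + h y + L / 2 * (norm (y - xt))\<^sup>2
                  \<le> lin f f' u xt + h u + L / 2 * (norm (u - xt))\<^sup>2"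
      using prox by (simp add: prox_pt_def)
    have hu: "h u \<le> (1 - t) * h y + t * h w"
      using h y w t unfolding u_def convex_on_def by auto
    have u_xt: "u - xt = (y - xt) + t *\<^sub>R (w - y)" by (simp add: u_def algebra_simps)
    have lin_u: "lin f f' u xt = lin f f' y xt + t * inner (f' xt) (w - y)"
      unfolding lin_def u_xt by (simp add: inner_add_right algebra_simps)
    have lin_w: "lin f f' w xt = lin f f' y xt + inner (f' xt) (w - y)"
      unfolding lin_def by (simp add: inner_diff_right algebra_simps)
    have norm_u: "(norm (u - xt))\<^sup>2
        = (norm (y - xt))\<^sup>2 + 2 * t * inner (y - xt) (w - y) + t\<^sup>2 * (norm (w - y))\<^sup>2"
      unfolding u_xt power2_norm_eq_inner
      by (simp add: inner_add_left inner_add_right inner_commute power2_eq_square algebra_simps)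
    have "t * (E + t * (L / 2 * (norm (w - y))\<^sup>2))
        = t * inner (f' xt) (w - y) + t * (h w - h y) + L * t * inner (y - xt) (w - y)
          + L / 2 * t\<^sup>2 * (norm (w - y))\<^sup>2"
      unfolding E_def lin_w by (simp add: inner_diff_left inner_diff_right power2_eq_square algebra_simps)
    then have "0 \<le> t * (E + t * (L / 2 * (norm (w - y))\<^sup>2))"
      using min hu lin_u norm_u by (simp add: algebra_simps)
    then show ?thesis using t by (simp add: zero_le_mult_iff)
  qed
  then have "0 \<le> E" by (rule nonneg_if_nonneg_perturbations)
  then show ?thesis by (simp add: E_def)
qed

lemma strongly_convex_on_midpoint:
  assumes "strongly_convex_on S m g" and "x \<in> S" and "y \<in> S"
  shows "g ((1/2) *\<^sub>R x + (1/2) *\<^sub>R y) \<le> (g x + g y) / 2 - m / 8 * (norm (x - y))\<^sup>2"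
proof -
  have "\<forall>x\<in>S. \<forall>y\<in>S. \<forall>t::real. 0 \<le> t \<longrightarrow> t \<le> 1 \<longrightarrow>
      g (t *\<^sub>R x + (1 - t) *\<^sub>R y) \<le> t * g x + (1 - t) * g y - m / 2 * t * (1 - t) * (norm (x - y))\<^sup>2"
    using assms(1) unfolding strongly_convex_on_def by blast
  from this[rule_format, OF assms(2,3), of "1/2"] show ?thesis by (simp add: add_divide_distrib)
qed

lemma prox_pt_lower_model:
  fixes f :: "'a::euclidean_space \<Rightarrow> real"
  assumes f_convex: "convex_on UNIV f"
    and f_grad: "\<And>z. (f has_derivative (\<lambda>d. inner (f' z) d)) (at z)"
    and h_convex: "convex_on H h"
    and phi_strong: "strongly_convex_on H m (\<lambda>z. f z + h z)"
    and \<mu>: "\<mu> \<le> m"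
    and prox: "prox_pt f f' h H xt L y"
    and z: "z \<in> H"
  shows "f y + h y + 2 * (lin f f' y xt - f y) + inner (L *\<^sub>R (xt - y)) (z - y)
           + \<mu> / 4 * (norm (z - y))\<^sup>2 \<le> f z + h z"
proof -
  have y: "y \<in> H" using prox by (simp add: prox_pt_def)
  define w where "w = (1/2) *\<^sub>R z + (1/2) *\<^sub>R y"
  have "w \<in> H" using convex_on_imp_convex[OF h_convex] z y unfolding w_def by (simp add: convex_def)
  have "w - y = (1/2) *\<^sub>R (z - y)" by (simp add: w_def algebra_simps flip: scaleR_add_left)
  then have "lin f f' y xt + h y + inner (L *\<^sub>R (xt - y)) (z - y) / 2 \<le> lin f f' w xt + h w"
    using prox_pt_variational_ineq[OF h_convex prox \<open>w \<in> H\<close>] by simp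
  also have "lin f f' w xt + h w \<le> f w + h w"
    using convex_on_has_derivative_above_tangent[where f'=f' and x=xt, OF f_convex f_grad]
    by (simp add: lin_def)
  also have "\<dots> \<le> (f z + h z + (f y + h y)) / 2 - m / 8 * (norm (z - y))\<^sup>2"
    using strongly_convex_on_midpoint[OF phi_strong z y] by (simp add: w_def)
  also have "\<dots> \<le> (f z + h z + (f y + h y)) / 2 - \<mu> / 8 * (norm (z - y))\<^sup>2"
    using \<mu> by (simp add: mult_right_mono)
  finally show ?thesis by (simp add: field_simps)
qed

theorem lemmaA5:
  fixes f :: "'a::euclidean_space \<Rightarrow> real" and f' :: "'a \<Rightarrow> 'a"
    and h :: "'a \<Rightarrow> real" and H :: "'a set"
    and Lbar mubar chi \<beta> \<mu> Lstart \<epsilon> :: real and x0 :: 'a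
    and L a A \<tau> :: "nat \<Rightarrow> real" and xt y s x \<xi> v :: "nat \<Rightarrow> 'a" and J :: nat
  assumes f_convex: "convex_on UNIV f"
    and f_grad: "\<And>z. (f has_derivative (\<lambda>d. inner (f' z) d)) (at z)"
    and Lbar_nonneg: "0 \<le> Lbar"
    and f_lip: "\<And>z z'. norm (f' z' - f' z) \<le> Lbar * norm (z' - z)"
    and H_nonempty: "H \<noteq> {}"
    and h_convex: "convex_on H h"
    and h_lsc: "closed {(z, t). z \<in> H \<and> h z \<le> t}"
    and mubar_pos: "0 < mubar"
    and phi_strong: "strongly_convex_on H mubar (\<lambda>z. f z + h z)"
    and chi: "0 < chi" "chi < 1"
    and beta: "1 < \<beta>"
    and eps: "0 < \<epsilon>"
    and x0_in: "x0 \<in> H"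
    and Lstart_pos: "0 < Lstart"
    and mu: "0 < \<mu>" "\<mu> \<le> mubar"
    and cycle: "rpf_cycle f f' h H chi \<beta> \<mu> x0 Lstart \<epsilon> L a xt y s A \<tau> x \<xi> v J"
  shows "\<forall>j\<in>{1..J}. \<forall>z\<in>H.
           f (y j) + h (y j) + 2 * (lin f f' (y j) (xt (j - 1)) - f (y j))
             + inner (s j) (z - y j) + \<mu> / 4 * (norm (z - y j))\<^sup>2
           \<le> f z + h z"
proof (intro ballI)
  fix j z assume "j \<in> {1..J}" and "z \<in> H"
  then have "prox_pt f f' h H (xt (j - 1)) (L j) (y j)" and "s j = L j *\<^sub>R (xt (j - 1) - y j)"
    using cycle unfolding rpf_cycle_def by blast+
  then show "f (y j) + h (y j) + 2 * (lin f f' (y j) (xt (j - 1)) - f (y j))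
      + inner (s j) (z - y j) + \<mu> / 4 * (norm (z - y j))\<^sup>2 \<le> f z + h z"
    using prox_pt_lower_model[OF f_convex f_grad h_convex phi_strong mu(2) _ \<open>z \<in> H\<close>] by simp
qed

end
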